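(* For integers $s,t\ge 5$ with $\max\{s,t\}\ge 6$, ${\rm dim}_s(\overline{C}_s\diamond\overline{C}_t)=st-\lfloor s/2\rfloor\lfloor t/2\rfloor$. Moreover, ${\rm dim}_s(\overline{C}_5\diamond\overline{C}_5)=20$.
   Context: The modular product $G\diamond H$ has vertex set $V(G)\times V(H)$; distinct vertices $(g,h)$ and $(g',h')$ are adjacent iff ($g=g'$ and $hh'\in E(H)$), or ($gg'\in E(G)$ and $h=h'$), or ($gg'\in E(G)$ and $hh'\in E(H)$), or ($g\neq g'$, $h\neq h'$, $gg'\notin E(G)$ and $hh'\notin E(H)$). $C_n$ is the cycle on $n$ vertices and $\overline{C}_n$ its complement. For a connected graph $X$, a vertex $z$ strongly resolves distinct vertices $x,y$ if $d_X(y,z)=d_X(y,x)+d_X(x,z)$ or $d_X(x,z)=d_X(x,y)+d_X(y,z)$; ${\rm dim}_s(X)$ is the minimum cardinality of a set $S\subseteq V(X)$ such that every pair of distinct vertices is strongly resolved by some vertex of $S$. *)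

theory Defs
  imports Main
begin

type_synonym 'a graph = "'a set \<times> ('a \<Rightarrow> 'a \<Rightarrow> bool)"

definition verts :: "'a graph \<Rightarrow> 'a set" where "verts G = fst G"
definition adj :: "'a graph \<Rightarrow> 'a \<Rightarrow> 'a \<Rightarrow> bool" where "adj G = snd G"

definition cycle_graph :: "nat \<Rightarrow> nat graph" where
  "cycle_graph n = ({..<n}, \<lambda>i j. i < n \<and> j < n \<and> i \<noteq> j \<and>
      (j = (i + 1) mod n \<or> i = (j + 1) mod n))"

definition complement :: "'a graph \<Rightarrow> 'a graph" where
  "complement G = (verts G, \<lambda>x y. x \<in> verts G \<and> y \<in> verts G \<and> x \<noteq> y \<and> \<not> adj G x y)"

definition modular_product :: "'a graph \<Rightarrow> 'b graph \<Rightarrow> ('a \<times> 'b) graph" where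
  "modular_product G H = (verts G \<times> verts H, \<lambda>(g,h) (g',h').
      (g,h) \<in> verts G \<times> verts H \<and> (g',h') \<in> verts G \<times> verts H \<and> (g,h) \<noteq> (g',h') \<and>
      ((g = g' \<and> adj H h h') \<or> (adj G g g' \<and> h = h') \<or> (adj G g g' \<and> adj H h h') \<or>
       (g \<noteq> g' \<and> h \<noteq> h' \<and> \<not> adj G g g' \<and> \<not> adj H h h')))"

definition edge_rel :: "'a graph \<Rightarrow> ('a \<times> 'a) set" where
  "edge_rel G = {(x, y). x \<in> verts G \<and> y \<in> verts G \<and> adj G x y}"

text \<open>Graph distance: length of a shortest walk (meaningful for connected graphs).\<close>
definition gdist :: "'a graph \<Rightarrow> 'a \<Rightarrow> 'a \<Rightarrow> nat" where
  "gdist G x y = (LEAST n. (x, y) \<in> edge_rel G ^^ n)"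

definition strongly_resolves :: "'a graph \<Rightarrow> 'a \<Rightarrow> 'a \<Rightarrow> 'a \<Rightarrow> bool" where
  "strongly_resolves G z x y \<longleftrightarrow>
     gdist G y z = gdist G y x + gdist G x z \<or> gdist G x z = gdist G x y + gdist G y z"

definition strong_resolving_set :: "'a graph \<Rightarrow> 'a set \<Rightarrow> bool" where
  "strong_resolving_set G S \<longleftrightarrow> S \<subseteq> verts G \<and>
     (\<forall>x\<in>verts G. \<forall>y\<in>verts G. x \<noteq> y \<longrightarrow> (\<exists>z\<in>S. strongly_resolves G z x y))"

definition strong_metric_dim :: "'a graph \<Rightarrow> nat" where
  "strong_metric_dim G = (LEAST k. \<exists>S. strong_resolving_set G S \<and> finite S \<and> card S = k)"

end

theory Submission
  imports Defs
begin

text \<open>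
  Write \<open>X\<close> for the modular product of the complements of \<open>C\<^sub>s\<close> and \<open>C\<^sub>t\<close>. Two distinct vertices
  \<open>(g, h)\<close>, \<open>(g', h')\<close> of \<open>X\<close> are adjacent iff \<open>g g'\<close> is an edge of \<open>C\<^sub>s\<close> exactly when
  \<open>h h'\<close> is an edge of \<open>C\<^sub>t\<close>. For \<open>s, t \<ge> 5\<close> the graph \<open>X\<close> has diameter two and no two adjacent
  vertices have the same closed neighbourhood. In such a graph a non-adjacent pair is strongly resolved
  only by its own members, and an adjacent pair by a vertex adjacent to exactly one of them; hence
  a set is strongly resolving iff its complement is a clique, and
  \<open>dim\<^sub>s(X) = |V(X)| - \<omega>(X)\<close>.

  A clique \<open>K\<close> meets each column \<open>{g} \<times> C\<^sub>t\<close> in an independent set of \<open>C\<^sub>t\<close>; for adjacent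
  \<open>g, g'\<close> every vertex of one column is adjacent in \<open>C\<^sub>t\<close> to every vertex of the other, so, \<open>C\<^sub>t\<close>
  having no 4-cycles, two adjacent columns carry at most \<open>max \<lfloor>t/2\<rfloor> 3\<close> vertices, and four
  consecutive nonempty columns carry at most one vertex each. Pairing consecutive columns around
  \<open>C\<^sub>s\<close> gives \<open>\<omega>(X) \<le> \<lfloor>s/2\<rfloor>\<lfloor>t/2\<rfloor>\<close> when \<open>t \<ge> 6\<close>, attained by the even grid, and
  \<open>\<omega>(X) \<le> 5\<close> for \<open>s = t = 5\<close>, attained by the diagonal.
\<close>

section \<open>Sums around a cycle\<close>

lemma Suc_mod_less: "a < n \<Longrightarrow> Suc a mod n = (if Suc a = n then 0 else Suc a)"
  by (simp add: mod_Suc)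

lemma add_mod_less_double:
  fixes a b n :: nat
  assumes "a < n" "b < n"
  shows "(a + b) mod n = (if a + b < n then a + b else a + b - n)"
  using assms by (simp add: mod_if)

lemma sum_rotate_mod:
  fixes f :: "nat \<Rightarrow> 'a :: comm_monoid_add"
  shows "(\<Sum>g<n. f ((g + c) mod n)) = (\<Sum>g<n. f g)"
proof (cases "n = 0")
  case False
  have inj: "inj_on (\<lambda>g. (g + c) mod n) {..<n}"
  proof
    fix a b assume "a \<in> {..<n}" "b \<in> {..<n}" and eq: "(a + c) mod n = (b + c) mod n"
    then have "a < n" "b < n" and c: "c mod n < n" using False by auto
    moreover have "(a + c mod n) mod n = (b + c mod n) mod n" using eq by (simp add: mod_add_right_eq)
    ultimately show "a = b"
      using add_mod_less_double[OF \<open>a < n\<close> c] add_mod_less_double[OF \<open>b < n\<close> c] by (auto split: if_splits)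
  qed
  then have "(\<lambda>g. (g + c) mod n) ` {..<n} = {..<n}"
    by (intro endo_inj_surj) (use False in auto)
  then show ?thesis using sum.reindex[OF inj, of f] by simp
qed simp

lemma sum_rotate_zero:
  fixes f :: "nat \<Rightarrow> 'a :: comm_monoid_add"
  assumes "e < n" "f e = 0"
  shows "(\<Sum>g<n. f g) = (\<Sum>g<n - 1. f ((g + Suc e) mod n))"
proof -
  have "(n - 1 + Suc e) mod n = e" using assms by simp
  then have "(\<Sum>g<Suc (n - 1). f ((g + Suc e) mod n)) = (\<Sum>g<n - 1. f ((g + Suc e) mod n))"
    using assms(2) by simp
  moreover have "Suc (n - 1) = n" using assms(1) by simp
  ultimately show ?thesis using sum_rotate_mod[of f "Suc e" n] by simp
qed

lemma sum_lessThan_double: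
  fixes f :: "nat \<Rightarrow> 'a :: comm_monoid_add"
  shows "(\<Sum>g<2 * k. f g) = (\<Sum>i<k. f (2 * i) + f (2 * i + 1))"
  by (induction k) (simp_all add: algebra_simps)

lemma sum_cyclic_le_by_pairs:
  fixes f :: "nat \<Rightarrow> nat"
  assumes pair: "\<And>a. a < n \<Longrightarrow> f a + f ((a + 1) mod n) \<le> m"
    and even_or_zero: "even n \<or> (\<exists>e<n. f e = 0)"
  shows "(\<Sum>a<n. f a) \<le> n div 2 * m"
proof (cases "even n")
  case True
  then obtain k where k: "n = 2 * k" by blast
  have "(\<Sum>a<n. f a) = (\<Sum>i<k. f (2 * i) + f (2 * i + 1))" using k sum_lessThan_double by simp
  also have "\<dots> \<le> (\<Sum>i<k. m)"
  proof (rule sum_mono)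
    fix i assume "i \<in> {..<k}"
    then have "2 * i + 1 < n" using k by auto
    then show "f (2 * i) + f (2 * i + 1) \<le> m" using pair[of "2 * i"] by simp
  qed
  finally show ?thesis using k by simp
next
  case False
  then obtain e where e: "e < n" "f e = 0" using even_or_zero by blast
  obtain k where k: "n = 2 * k + 1" using False oddE by blast
  let ?F = "\<lambda>g. f ((g + Suc e) mod n)"
  have "(\<Sum>a<n. f a) = (\<Sum>i<k. ?F (2 * i) + ?F (2 * i + 1))"
    using sum_rotate_zero[where f = f, OF e] k sum_lessThan_double[of ?F k] by simp
  also have "\<dots> \<le> (\<Sum>i<k. m)"
  proof (rule sum_mono)
    fix i
    have "?F (2 * i + 1) = f (((2 * i + Suc e) mod n + 1) mod n)" by (simp add: mod_Suc_eq)
    then show "?F (2 * i) + ?F (2 * i + 1) \<le> m" using pair[of "(2 * i + Suc e) mod n"] k by simp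
  qed
  finally show ?thesis using k by simp
qed

section \<open>The cycle \<open>C\<^sub>n\<close>\<close>

definition cycle_adj :: "nat \<Rightarrow> nat \<Rightarrow> nat \<Rightarrow> bool" where
  "cycle_adj n a b \<longleftrightarrow> a < n \<and> b < n \<and> a \<noteq> b \<and> (b = (a + 1) mod n \<or> a = (b + 1) mod n)"

lemma verts_cycle_graph [simp]: "verts (cycle_graph n) = {..<n}"
  by (simp add: verts_def cycle_graph_def)

lemma adj_cycle_graph [simp]: "adj (cycle_graph n) = cycle_adj n"
  by (auto simp: adj_def cycle_graph_def cycle_adj_def fun_eq_iff)

lemma cycle_adj_sym: "cycle_adj n a b \<longleftrightarrow> cycle_adj n b a"
  by (auto simp: cycle_adj_def)

lemma cycle_adj_irrefl [simp]: "\<not> cycle_adj n a a"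
  by (simp add: cycle_adj_def)

lemma cycle_adj_iff:
  assumes "3 \<le> n"
  shows "cycle_adj n a b \<longleftrightarrow>
    a < n \<and> b < n \<and> (b = a + 1 \<or> a = b + 1 \<or> (a = 0 \<and> b = n - 1) \<or> (b = 0 \<and> a = n - 1))"
  unfolding cycle_adj_def using assms Suc_mod_less[of a n] Suc_mod_less[of b n]
  by (cases "a < n"; cases "b < n") (auto split: if_splits)

lemma cycle_adj_Suc_mod:
  assumes "2 \<le> n" "a < n"
  shows "cycle_adj n a ((a + 1) mod n)"
  using assms Suc_mod_less[of a n] by (auto simp: cycle_adj_def)

lemma cycle_adj_mod_Suc:
  assumes "2 \<le> n"
  shows "cycle_adj n (a mod n) (Suc a mod n)"
  using cycle_adj_Suc_mod[OF assms, of "a mod n"] assms by (simp add: mod_Suc_eq)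

lemma cycle_not_adj_add_3:
  assumes "5 \<le> n" "a < n"
  shows "a \<noteq> (a + 3) mod n \<and> \<not> cycle_adj n a ((a + 3) mod n)"
  using assms by (auto simp: cycle_adj_iff mod_if)

lemma not_cycle_adj_double:
  assumes "3 \<le> n" "i < n div 2" "j < n div 2"
  shows "\<not> cycle_adj n (2 * i) (2 * j)"
  using assms by (simp add: cycle_adj_iff) presburger

lemma cycle_no_four_cycle:
  assumes "5 \<le> n" "cycle_adj n c a" "cycle_adj n c b" "cycle_adj n d a" "cycle_adj n d b"
    "a \<noteq> b" "c \<noteq> d"
  shows False
  using assms by (simp add: cycle_adj_iff) arith

lemma cycle_neighbour_cases:
  assumes "5 \<le> n" "cycle_adj n c a" "cycle_adj n c b" "cycle_adj n c d" "a \<noteq> b"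
  shows "d = a \<or> d = b"
  using assms by (simp add: cycle_adj_iff) arith

lemma cycle_nonneighbour_of_edge:
  assumes n: "5 \<le> n" and ab: "cycle_adj n a b"
  obtains c where "c < n" "c \<noteq> a" "c \<noteq> b" "\<not> cycle_adj n a c" "\<not> cycle_adj n b c"
proof -
  have n3: "3 \<le> n" using n by simp
  have "a < n" "b < n" "b = a + 1 \<or> a = b + 1 \<or> (a = 0 \<and> b = n - 1) \<or> (b = 0 \<and> a = n - 1)"
    using ab by (simp_all add: cycle_adj_iff[OF n3])
  then consider "b = a + 1" | "a = b + 1" | "a = 0 \<and> b = n - 1 \<or> b = 0 \<and> a = n - 1"
    by blast
  then show thesis
  proof cases
    case 1
    let ?c = "(a + 3) mod n"
    show thesis by (rule that[of ?c]) (use 1 n \<open>a < n\<close> in \<open>auto simp: cycle_adj_iff[OF n3] mod_if\<close>)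
  next
    case 2
    let ?c = "(b + 3) mod n"
    show thesis by (rule that[of ?c]) (use 2 n \<open>b < n\<close> in \<open>auto simp: cycle_adj_iff[OF n3] mod_if\<close>)
  next
    case 3
    show thesis by (rule that[of 2]) (use 3 n in \<open>auto simp: cycle_adj_iff[OF n3]\<close>)
  qed
qed

lemma cycle_private_neighbour:
  assumes "5 \<le> n" "a < n" "b < n" "a \<noteq> b"
  obtains c where "c < n" "c \<noteq> a" "cycle_adj n b c" "\<not> cycle_adj n a c"
proof -
  let ?c1 = "if b + 1 < n then b + 1 else 0" and ?c2 = "if b = 0 then n - 1 else b - 1"
  have "(cycle_adj n b ?c1 \<and> \<not> cycle_adj n a ?c1 \<and> ?c1 \<noteq> a) \<or>
        (cycle_adj n b ?c2 \<and> \<not> cycle_adj n a ?c2 \<and> ?c2 \<noteq> a)"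
    using assms by (simp add: cycle_adj_iff) arith
  moreover have "?c1 < n" "?c2 < n" using assms by auto
  ultimately show thesis using that by blast
qed

lemma finite_cycle_neighbours: "finite {b. cycle_adj n a b}"
  by (rule finite_subset[of _ "{..<n}"]) (auto simp: cycle_adj_def)

lemma card_cycle_neighbours_le:
  assumes "3 \<le> n"
  shows "card {b. cycle_adj n a b} \<le> 2"
proof -
  have "{b. cycle_adj n a b} \<subseteq> {if a + 1 < n then a + 1 else 0, if a = 0 then n - 1 else a - 1}"
    using assms by (auto simp: cycle_adj_iff)
  then have "card {b. cycle_adj n a b} \<le> card {if a + 1 < n then a + 1 else 0, if a = 0 then n - 1 else a - 1}"
    by (rule card_mono[rotated]) simp
  also have "\<dots> \<le> 2" by (simp add: card_insert_le_m1)
  finally show ?thesis .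
qed

text \<open>The rotation \<open>a \<mapsto> a + 1\<close> maps an independent set of \<open>C\<^sub>n\<close> injectively into its complement.\<close>
lemma card_cycle_independent_le:
  assumes n: "2 \<le> n" and I: "I \<subseteq> {..<n}" and indep: "\<And>a b. a \<in> I \<Longrightarrow> b \<in> I \<Longrightarrow> \<not> cycle_adj n a b"
  shows "card I \<le> n div 2"
proof -
  let ?succ = "\<lambda>a. (a + 1) mod n"
  have "inj_on ?succ I"
  proof
    fix a b assume "a \<in> I" "b \<in> I" and eq: "?succ a = ?succ b"
    then have "a < n" "b < n" using I by auto
    then show "a = b" using eq Suc_mod_less[of a n] Suc_mod_less[of b n] by (simp split: if_splits)
  qed
  then have card_succ: "card (?succ ` I) = card I" by (rule card_image)
  have "I \<inter> ?succ ` I = {}"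
    using indep I cycle_adj_Suc_mod[OF n] by blast
  then have "card (I \<union> ?succ ` I) = 2 * card I"
    using card_succ finite_subset[OF I] by (simp add: card_Un_disjoint)
  moreover have "I \<union> ?succ ` I \<subseteq> {..<n}" using I n by auto
  then have "card (I \<union> ?succ ` I) \<le> n" by (metis card_lessThan card_mono finite_lessThan)
  ultimately show ?thesis by linarith
qed

section \<open>Graphs of diameter two\<close>

definition clique :: "'a graph \<Rightarrow> 'a set \<Rightarrow> bool" where
  "clique G K \<longleftrightarrow> K \<subseteq> verts G \<and> (\<forall>x\<in>K. \<forall>y\<in>K. x \<noteq> y \<longrightarrow> adj G x y)"

lemma strongly_resolves_commute: "strongly_resolves G z x y \<longleftrightarrow> strongly_resolves G z y x"
  unfolding strongly_resolves_def by auto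

lemma gdist_self [simp]: "gdist G x x = 0"
  unfolding gdist_def by (rule Least_eq_0) simp

lemma strongly_resolves_self [simp]: "strongly_resolves G x x y" "strongly_resolves G y x y"
  unfolding strongly_resolves_def by simp_all

lemma Least_relpow_eq:
  assumes "(x, y) \<in> R ^^ n" "\<And>m. m < n \<Longrightarrow> (x, y) \<notin> R ^^ m"
  shows "(LEAST k. (x, y) \<in> R ^^ k) = n"
proof (rule Least_equality)
  fix k assume "(x, y) \<in> R ^^ k"
  then show "n \<le> k" using assms(2) not_less by blast
qed (fact assms(1))

locale diameter_two_graph =
  fixes G :: "'a graph"
  assumes adj_verts: "adj G x y \<Longrightarrow> x \<in> verts G \<and> y \<in> verts G"
    and adj_irrefl: "\<not> adj G x x"
    and adj_sym: "adj G x y \<Longrightarrow> adj G y x"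
    and common_neighbour:
      "\<lbrakk>x \<in> verts G; y \<in> verts G; x \<noteq> y; \<not> adj G x y\<rbrakk> \<Longrightarrow> \<exists>z. adj G x z \<and> adj G z y"
begin

lemma edge_rel_iff_adj: "(x, y) \<in> edge_rel G \<longleftrightarrow> adj G x y"
  using adj_verts by (auto simp: edge_rel_def)

lemma gdist_eq:
  assumes "x \<in> verts G" "y \<in> verts G"
  shows "gdist G x y = (if x = y then 0 else if adj G x y then 1 else 2)"
proof -
  have walk0: "(x, y) \<in> edge_rel G ^^ 0 \<longleftrightarrow> x = y" by simp
  have walk1: "(x, y) \<in> edge_rel G ^^ 1 \<longleftrightarrow> adj G x y" by (simp add: edge_rel_iff_adj)
  consider "x = y" | "x \<noteq> y" "adj G x y" | "x \<noteq> y" "\<not> adj G x y" by blast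
  then show ?thesis
  proof cases
    case 2
    then have "gdist G x y = 1"
      unfolding gdist_def using walk0 walk1 by (intro Least_relpow_eq) auto
    then show ?thesis using 2 by simp
  next
    case 3
    obtain z where "adj G x z" "adj G z y" using common_neighbour[OF assms 3] by blast
    then have "(x, y) \<in> edge_rel G ^^ Suc (Suc 0)"
      by (meson edge_rel_iff_adj relpow_0_I relpow_Suc_I)
    then have "gdist G x y = 2"
      unfolding gdist_def using walk0 walk1 3
      by (intro Least_relpow_eq) (auto simp: numeral_2_eq_2 less_Suc_eq)
    then show ?thesis using 3 by simp
  qed simp
qed

lemma strongly_resolves_nonadjacent:
  assumes "x \<in> verts G" "y \<in> verts G" "z \<in> verts G" "x \<noteq> y" "\<not> adj G x y"
    and "strongly_resolves G z x y"
  shows "z = x \<or> z = y"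
  using assms gdist_eq[of x y] gdist_eq[of y x] gdist_eq[of x z] gdist_eq[of y z] adj_sym
  unfolding strongly_resolves_def by (auto split: if_splits)

lemma strongly_resolves_neighbour:
  assumes "adj G x y" "adj G x z" "\<not> adj G y z" "z \<noteq> y"
  shows "strongly_resolves G z x y"
  using assms adj_verts adj_irrefl adj_sym gdist_eq[of y x] gdist_eq[of x z] gdist_eq[of y z]
  unfolding strongly_resolves_def by (metis one_add_one)

lemma clique_Diff_strong_resolving_set:
  assumes "strong_resolving_set G S"
  shows "clique G (verts G - S)"
  unfolding clique_def
proof (intro conjI ballI impI)
  fix x y assume x: "x \<in> verts G - S" and y: "y \<in> verts G - S" and "x \<noteq> y"
  then obtain z where "z \<in> S" "strongly_resolves G z x y"
    using assms unfolding strong_resolving_set_def by blast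
  moreover have "z \<in> verts G" using assms \<open>z \<in> S\<close> unfolding strong_resolving_set_def by blast
  ultimately show "adj G x y"
    using strongly_resolves_nonadjacent[of x y z] x y \<open>x \<noteq> y\<close> by blast
qed auto

end

locale twin_free_diameter_two_graph = diameter_two_graph +
  assumes distinguishing_vertex:
    "adj G x y \<Longrightarrow> \<exists>z\<in>verts G. z \<noteq> x \<and> z \<noteq> y \<and> (adj G x z \<longleftrightarrow> \<not> adj G y z)"
begin

lemma strong_resolving_set_Diff_clique:
  assumes W: "clique G W"
  shows "strong_resolving_set G (verts G - W)"
  unfolding strong_resolving_set_def
proof (intro conjI ballI impI)
  fix x y assume x: "x \<in> verts G" and y: "y \<in> verts G" and "x \<noteq> y"
  show "\<exists>z\<in>verts G - W. strongly_resolves G z x y"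
  proof (cases "x \<in> W \<and> y \<in> W")
    case False
    then consider "x \<notin> W" | "y \<notin> W" by blast
    then show ?thesis
      by cases (use x y in \<open>auto intro: bexI[of _ x] bexI[of _ y]\<close>)
  next
    case True
    then have xy: "adj G x y" using W \<open>x \<noteq> y\<close> unfolding clique_def by blast
    then obtain z where z: "z \<in> verts G" "z \<noteq> x" "z \<noteq> y" "adj G x z \<longleftrightarrow> \<not> adj G y z"
      using distinguishing_vertex by blast
    have "z \<notin> W"
    proof
      assume "z \<in> W"
      then have "adj G x z" "adj G y z" using W True z(2,3) unfolding clique_def by auto
      then show False using z(4) by simp
    qed
    moreover have "strongly_resolves G z x y"
    proof (cases "adj G x z")
      case True
      then show ?thesis using z(3,4) xy strongly_resolves_neighbour by blast
    next
      case False
      then have "strongly_resolves G z y x"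
        using z(2,4) adj_sym[OF xy] strongly_resolves_neighbour by blast
      then show ?thesis by (simp add: strongly_resolves_commute)
    qed
    ultimately show ?thesis using z by blast
  qed
qed auto

theorem strong_metric_dim_eq:
  assumes fin: "finite (verts G)" and W: "clique G W"
    and maximum: "\<And>K. clique G K \<Longrightarrow> card K \<le> card W"
  shows "strong_metric_dim G = card (verts G) - card W"
  unfolding strong_metric_dim_def
proof (rule Least_equality)
  have "W \<subseteq> verts G" using W unfolding clique_def by blast
  then show "\<exists>S. strong_resolving_set G S \<and> finite S \<and> card S = card (verts G) - card W"
    using strong_resolving_set_Diff_clique[OF W] fin by (auto simp: card_Diff_subset finite_subset)
next
  fix k assume "\<exists>S. strong_resolving_set G S \<and> finite S \<and> card S = k"
  then obtain S where S: "strong_resolving_set G S" "card S = k" by blast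
  have "S \<subseteq> verts G" using S unfolding strong_resolving_set_def by blast
  then have "card (verts G - S) = card (verts G) - k" "k \<le> card (verts G)"
    using S fin by (auto simp: card_Diff_subset finite_subset card_mono)
  moreover have "card (verts G - S) \<le> card W"
    using maximum clique_Diff_strong_resolving_set[OF S(1)] by blast
  ultimately show "card (verts G) - card W \<le> k" by linarith
qed

end

section \<open>The modular product of two complemented cycles\<close>

abbreviation cocycle_product :: "nat \<Rightarrow> nat \<Rightarrow> (nat \<times> nat) graph" where
  "cocycle_product s t \<equiv> modular_product (complement (cycle_graph s)) (complement (cycle_graph t))"

lemma verts_cocycle_product [simp]: "verts (cocycle_product s t) = {..<s} \<times> {..<t}"
  by (simp add: modular_product_def complement_def verts_def cycle_graph_def)

lemma adj_cocycle_product: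
  "adj (cocycle_product s t) (g, h) (g', h') \<longleftrightarrow>
     g < s \<and> h < t \<and> g' < s \<and> h' < t \<and> (g, h) \<noteq> (g', h') \<and> (cycle_adj s g g' \<longleftrightarrow> cycle_adj t h h')"
  unfolding modular_product_def complement_def
  using adj_cycle_graph[unfolded adj_def] verts_cycle_graph[unfolded verts_def]
  by (auto simp: adj_def verts_def)

lemma cocycle_product_common_neighbour:
  assumes s: "5 \<le> s" and t: "5 \<le> t" and x: "x \<in> {..<s} \<times> {..<t}" and y: "y \<in> {..<s} \<times> {..<t}"
    and "x \<noteq> y" "\<not> adj (cocycle_product s t) x y"
  shows "\<exists>z. adj (cocycle_product s t) x z \<and> adj (cocycle_product s t) z y"
proof -
  obtain g h g' h' where xy: "x = (g, h)" "y = (g', h')" by (cases x, cases y)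
  have "cycle_adj s g g' \<longleftrightarrow> \<not> cycle_adj t h h'"
    using assms xy by (auto simp: adj_cocycle_product)
  then consider "cycle_adj s g g'" "\<not> cycle_adj t h h'" | "cycle_adj t h h'" "\<not> cycle_adj s g g'"
    by blast
  then show ?thesis
  proof cases
    case 1
    obtain a where "a < s" "a \<noteq> g" "a \<noteq> g'" "\<not> cycle_adj s g a" "\<not> cycle_adj s g' a"
      using cycle_nonneighbour_of_edge[OF s 1(1)] .
    then show ?thesis
      using 1 x y by (intro exI[of _ "(a, h)"]) (auto simp: xy adj_cocycle_product cycle_adj_sym)
  next
    case 2
    obtain b where "b < t" "b \<noteq> h" "b \<noteq> h'" "\<not> cycle_adj t h b" "\<not> cycle_adj t h' b"
      using cycle_nonneighbour_of_edge[OF t 2(1)] .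
    then show ?thesis
      using 2 x y by (intro exI[of _ "(g, b)"]) (auto simp: xy adj_cocycle_product cycle_adj_sym)
  qed
qed

lemma cocycle_product_distinguishing_vertex:
  assumes s: "5 \<le> s" and t: "5 \<le> t" and xy: "adj (cocycle_product s t) x y"
  shows "\<exists>z\<in>{..<s} \<times> {..<t}. z \<noteq> x \<and> z \<noteq> y \<and>
    (adj (cocycle_product s t) x z \<longleftrightarrow> \<not> adj (cocycle_product s t) y z)"
proof -
  obtain g h g' h' where x: "x = (g, h)" and y: "y = (g', h')" by (cases x, cases y)
  have lt: "g < s" "h < t" "g' < s" "h' < t" and ne: "(g, h) \<noteq> (g', h')"
    and same: "cycle_adj s g g' \<longleftrightarrow> cycle_adj t h h'"
    using xy by (auto simp: x y adj_cocycle_product)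
  consider "cycle_adj s g g'" "cycle_adj t h h'" | "\<not> cycle_adj s g g'" "h \<noteq> h'"
    | "\<not> cycle_adj s g g'" "h = h'" "g \<noteq> g'"
    using same ne by blast
  then show ?thesis
  proof cases
    case 1
    obtain b where "b < t" "b \<noteq> h" "b \<noteq> h'" "\<not> cycle_adj t h b" "\<not> cycle_adj t h' b"
      using cycle_nonneighbour_of_edge[OF t 1(2)] .
    then show ?thesis
      using 1 lt by (intro bexI[of _ "(g, b)"]) (auto simp: x y adj_cocycle_product cycle_adj_sym)
  next
    case 2
    obtain b where "b < t" "b \<noteq> h" "cycle_adj t h' b" "\<not> cycle_adj t h b"
      using cycle_private_neighbour[OF t lt(2,4) 2(2)] .
    then show ?thesis
      using 2 lt by (intro bexI[of _ "(g, b)"]) (auto simp: x y adj_cocycle_product cycle_adj_sym)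
  next
    case 3
    obtain a where "a < s" "a \<noteq> g" "cycle_adj s g' a" "\<not> cycle_adj s g a"
      using cycle_private_neighbour[OF s lt(1,3) 3(3)] .
    then show ?thesis
      using 3 lt by (intro bexI[of _ "(a, h)"]) (auto simp: x y adj_cocycle_product cycle_adj_sym)
  qed
qed

lemma twin_free_diameter_two_graph_cocycle_product:
  assumes "5 \<le> s" "5 \<le> t"
  shows "twin_free_diameter_two_graph (cocycle_product s t)"
proof unfold_locales
  fix x y
  show "adj (cocycle_product s t) x y \<Longrightarrow> x \<in> verts (cocycle_product s t) \<and> y \<in> verts (cocycle_product s t)"
    "\<not> adj (cocycle_product s t) x x"
    "adj (cocycle_product s t) x y \<Longrightarrow> adj (cocycle_product s t) y x"
    by (cases x, cases y, auto simp: adj_cocycle_product cycle_adj_sym)+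
qed (use assms cocycle_product_common_neighbour cocycle_product_distinguishing_vertex in auto)

section \<open>Cliques of the product\<close>

lemma clique_cocycle_product_iff:
  "clique (cocycle_product s t) K \<longleftrightarrow> K \<subseteq> {..<s} \<times> {..<t} \<and>
     (\<forall>p\<in>K. \<forall>q\<in>K. p \<noteq> q \<longrightarrow> (cycle_adj s (fst p) (fst q) \<longleftrightarrow> cycle_adj t (snd p) (snd q)))"
proof -
  have "adj (cocycle_product s t) p q \<longleftrightarrow> p \<in> {..<s} \<times> {..<t} \<and> q \<in> {..<s} \<times> {..<t} \<and> p \<noteq> q \<and>
      (cycle_adj s (fst p) (fst q) \<longleftrightarrow> cycle_adj t (snd p) (snd q))" for p q
    by (cases p, cases q) (simp add: adj_cocycle_product)
  then show ?thesis unfolding clique_def by auto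
qed

lemma clique_cocycle_productD:
  assumes "clique (cocycle_product s t) K" "(g, h) \<in> K" "(g', h') \<in> K" "(g, h) \<noteq> (g', h')"
  shows "cycle_adj s g g' \<longleftrightarrow> cycle_adj t h h'"
  using assms unfolding clique_cocycle_product_iff by fastforce

lemma clique_cocycle_product_swap:
  "clique (cocycle_product s t) K \<Longrightarrow> clique (cocycle_product t s) (prod.swap ` K)"
  unfolding clique_cocycle_product_iff by auto

lemma clique_cocycle_product_diagonal: "clique (cocycle_product n n) ((\<lambda>i. (i, i)) ` {..<n})"
  unfolding clique_cocycle_product_iff by auto

lemma clique_cocycle_product_even_grid:
  assumes "3 \<le> s" "3 \<le> t"
  shows "clique (cocycle_product s t) ((\<lambda>(i, j). (2 * i, 2 * j)) ` ({..<s div 2} \<times> {..<t div 2}))"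
  unfolding clique_cocycle_product_iff using assms not_cycle_adj_double by auto

lemma card_even_grid: "card ((\<lambda>(i, j). (2 * i, 2 * j)) ` ({..<m} \<times> {..<n})) = m * n"
proof -
  have "inj_on (\<lambda>(i :: nat, j :: nat). (2 * i, 2 * j)) ({..<m} \<times> {..<n})"
    by (auto simp: inj_on_def)
  then show ?thesis by (simp add: card_image card_cartesian_product)
qed

context
  fixes s t :: nat and K :: "(nat \<times> nat) set"
  assumes K: "clique (cocycle_product s t) K"
begin

lemma clique_column_subset: "K `` {g} \<subseteq> {..<t}"
  using K unfolding clique_cocycle_product_iff by auto

lemma finite_clique_column: "finite (K `` {g})"
  using clique_column_subset finite_subset by blast

lemma card_clique_eq_sum_columns: "card K = (\<Sum>g<s. card (K `` {g}))"
proof -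
  have "K = Sigma {..<s} (\<lambda>g. K `` {g})" using K unfolding clique_cocycle_product_iff by auto
  then show ?thesis using finite_clique_column by (metis card_SigmaI finite_lessThan)
qed

lemma card_clique_column_le: "2 \<le> t \<Longrightarrow> card (K `` {g}) \<le> t div 2"
  using clique_cocycle_productD[OF K, of g _ g] clique_column_subset
  by (intro card_cycle_independent_le) (auto simp: cycle_adj_def)

lemma clique_column_subset_neighbours:
  assumes "cycle_adj s g g'" "h' \<in> K `` {g'}"
  shows "K `` {g} \<subseteq> {h. cycle_adj t h' h}"
proof -
  have "g \<noteq> g'" using assms(1) by auto
  then show ?thesis using assms clique_cocycle_productD[OF K, of g _ g' h'] by (auto simp: cycle_adj_sym)
qed

text \<open>Two adjacent nonempty columns would otherwise contain a 4-cycle of \<open>C\<^sub>t\<close>.\<close>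
lemma card_adjacent_columns_le:
  assumes t: "5 \<le> t" and gg': "cycle_adj s g g'"
  shows "card (K `` {g}) + card (K `` {g'}) \<le> max (t div 2) 3"
proof (cases "K `` {g} = {} \<or> K `` {g'} = {}")
  case True
  then show ?thesis using card_clique_column_le[of g] card_clique_column_le[of g'] t by auto
next
  case False
  then obtain h y where h: "h \<in> K `` {g}" and y: "y \<in> K `` {g'}" by blast
  have g'g: "cycle_adj s g' g" using gg' cycle_adj_sym by metis
  have "card (K `` {g}) \<le> 2" "card (K `` {g'}) \<le> 2"
    using card_mono[OF finite_cycle_neighbours clique_column_subset_neighbours[OF gg' y]]
      card_mono[OF finite_cycle_neighbours clique_column_subset_neighbours[OF g'g h]]
      card_cycle_neighbours_le[of t y] card_cycle_neighbours_le[of t h] t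
    by linarith+
  moreover have "card (K `` {g}) \<le> 1 \<or> card (K `` {g'}) \<le> 1"
  proof (rule ccontr)
    assume "\<not> ?thesis"
    then obtain h1 h2 y1 y2 where h12: "h1 \<in> K `` {g}" "h2 \<in> K `` {g}" "h1 \<noteq> h2"
      and y12: "y1 \<in> K `` {g'}" "y2 \<in> K `` {g'}" "y1 \<noteq> y2"
      using card_le_Suc0_iff_eq[OF finite_clique_column] by (metis One_nat_def)
    have "cycle_adj t y1 h1" "cycle_adj t y1 h2" "cycle_adj t y2 h1" "cycle_adj t y2 h2"
      using h12 clique_column_subset_neighbours[OF gg' y12(1)] clique_column_subset_neighbours[OF gg' y12(2)]
      by auto
    then show False using cycle_no_four_cycle[OF t _ _ _ _ h12(3) y12(3)] by blast
  qed
  ultimately show ?thesis by linarith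
qed

lemma card_path_columns_le:
  assumes t: "5 \<le> t"
    and c01: "cycle_adj s c0 c1" and c12: "cycle_adj s c1 c2" and c23: "cycle_adj s c2 c3"
    and c03: "c0 \<noteq> c3" "\<not> cycle_adj s c0 c3"
    and nonempty: "K `` {c0} \<noteq> {}" "K `` {c1} \<noteq> {}" "K `` {c2} \<noteq> {}" "K `` {c3} \<noteq> {}"
  shows "card (K `` {c0}) \<le> 1 \<and> card (K `` {c1}) \<le> 1"
proof
  have c10: "cycle_adj s c1 c0" and c21: "cycle_adj s c2 c1" and c32: "cycle_adj s c3 c2"
    using c01 c12 c23 cycle_adj_sym by metis+
  have far: "\<not> cycle_adj t x y" if "x \<in> K `` {c0}" "y \<in> K `` {c3}" for x y
    using clique_cocycle_productD[OF K, of c0 x c3 y] that c03 by auto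
  show "card (K `` {c0}) \<le> 1"
    unfolding One_nat_def card_le_Suc0_iff_eq[OF finite_clique_column]
  proof (intro ballI, rule ccontr)
    fix h1 h2 assume h: "h1 \<in> K `` {c0}" "h2 \<in> K `` {c0}" "h1 \<noteq> h2"
    obtain y1 y2 y3 where y: "y1 \<in> K `` {c1}" "y2 \<in> K `` {c2}" "y3 \<in> K `` {c3}"
      using nonempty by blast
    have "cycle_adj t y1 h1" "cycle_adj t y1 h2" "cycle_adj t y1 y2"
      using clique_column_subset_neighbours[OF c01 y(1)] clique_column_subset_neighbours[OF c21 y(1)] h y
      by auto
    then have "y2 = h1 \<or> y2 = h2" by (intro cycle_neighbour_cases[OF t _ _ _ h(3)])
    moreover have "cycle_adj t y2 y3" using clique_column_subset_neighbours[OF c32 y(2)] y by auto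
    ultimately show False using far[OF h(1) y(3)] far[OF h(2) y(3)] by auto
  qed
  show "card (K `` {c1}) \<le> 1"
    unfolding One_nat_def card_le_Suc0_iff_eq[OF finite_clique_column]
  proof (intro ballI, rule ccontr)
    fix h1 h2 assume h: "h1 \<in> K `` {c1}" "h2 \<in> K `` {c1}" "h1 \<noteq> h2"
    obtain x y1 y2 where y: "x \<in> K `` {c0}" "y1 \<in> K `` {c2}" "y2 \<in> K `` {c3}"
      using nonempty by blast
    have "cycle_adj t x h1" "cycle_adj t x h2" "cycle_adj t y1 h1" "cycle_adj t y1 h2"
      using clique_column_subset_neighbours[OF c10 y(1)] clique_column_subset_neighbours[OF c12 y(2)] h
      by auto
    then have "x = y1" by (metis cycle_no_four_cycle[OF t _ _ _ _ h(3)])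
    moreover have "cycle_adj t y1 y2" using clique_column_subset_neighbours[OF c32 y(2)] y by auto
    ultimately show False using far[OF y(1) y(3)] by simp
  qed
qed

lemma card_window_columns_le:
  assumes s: "5 \<le> s" and t: "5 \<le> t" and g: "g < s"
    and nonempty: "\<And>i. i < 4 \<Longrightarrow> K `` {(g + i) mod s} \<noteq> {}"
    and i: "i < 4"
  shows "card (K `` {(g + i) mod s}) \<le> 1"
proof -
  let ?c = "\<lambda>i. (g + i) mod s"
  have "cycle_adj s (?c i) (?c (Suc i))" for i
    using cycle_adj_mod_Suc[of s "g + i"] s by simp
  from this[of 0] this[of 1] this[of 2]
  have path: "cycle_adj s (?c 0) (?c 1)" "cycle_adj s (?c 1) (?c 2)" "cycle_adj s (?c 2) (?c 3)"
    by simp_all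
  have far: "?c 0 \<noteq> ?c 3" "\<not> cycle_adj s (?c 0) (?c 3)"
    using cycle_not_adj_add_3[OF s g] g by simp_all
  have ne: "K `` {?c 0} \<noteq> {}" "K `` {?c 1} \<noteq> {}" "K `` {?c 2} \<noteq> {}" "K `` {?c 3} \<noteq> {}"
    using nonempty[of 0] nonempty[of 1] nonempty[of 2] nonempty[of 3] by simp_all
  have "card (K `` {?c 0}) \<le> 1 \<and> card (K `` {?c 1}) \<le> 1"
    using card_path_columns_le[OF t path far ne] .
  moreover have "card (K `` {?c 3}) \<le> 1 \<and> card (K `` {?c 2}) \<le> 1"
    using card_path_columns_le[OF t, of "?c 3" "?c 2" "?c 1" "?c 0"] path far ne
    by (simp add: cycle_adj_sym)
  moreover have "i = 0 \<or> i = 1 \<or> i = 2 \<or> i = 3" using i by auto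
  ultimately show ?thesis by auto
qed

end

lemma card_clique_cocycle_product_le:
  assumes s: "5 \<le> s" and t: "6 \<le> t" and K: "clique (cocycle_product s t) K"
  shows "card K \<le> s div 2 * (t div 2)"
proof -
  let ?f = "\<lambda>g. card (K `` {g})"
  have half: "3 \<le> t div 2" using t by presburger
  then have pair: "?f a + ?f ((a + 1) mod s) \<le> t div 2" if "a < s" for a
    using card_adjacent_columns_le[OF K _ cycle_adj_Suc_mod[OF _ that]] s t by (simp add: max_def)
  have card_K: "card K = (\<Sum>g<s. ?f g)" by (rule card_clique_eq_sum_columns[OF K])
  show ?thesis
  proof (cases "even s \<or> (\<exists>e<s. ?f e = 0)")
    case True
    then show ?thesis using sum_cyclic_le_by_pairs[of s ?f "t div 2", OF pair] card_K by simp
  next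
    case False
    then obtain k where k: "s = 2 * k + 1" by (meson oddE)
    have "K `` {e} \<noteq> {}" if "e < s" for e
      using False that by fastforce
    then have "?f g \<le> 1" if "g < s" for g
      using card_window_columns_le[OF K s _ that _, of 0] t that s by simp
    then have "card K \<le> (\<Sum>g<s. 1)" unfolding card_K by (intro sum_mono) auto
    also have "\<dots> \<le> k * 3" using k s by simp
    also have "\<dots> \<le> s div 2 * (t div 2)" using k mult_le_mono2[OF half, of k] by simp
    finally show ?thesis .
  qed
qed

lemma card_clique_cocycle_product_5_5_le:
  assumes K: "clique (cocycle_product 5 5) K"
  shows "card K \<le> 5"
proof -
  let ?f = "\<lambda>g. card (K `` {g})"
  have pair: "?f a + ?f ((a + 1) mod 5) \<le> 3" if "a < 5" for a
    using card_adjacent_columns_le[OF K _ cycle_adj_Suc_mod[OF _ that]] by simp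
  have card_K: "card K = (\<Sum>g<5. ?f g)" by (rule card_clique_eq_sum_columns[OF K])
  show ?thesis
  proof (cases "\<exists>e<5. ?f e = 0")
    case False
    then have "K `` {e} \<noteq> {}" if "e < 5" for e
      using that by fastforce
    then have "?f g \<le> 1" if "g < 5" for g
      using card_window_columns_le[OF K _ _ that _, of 0] that by simp
    then have "card K \<le> (\<Sum>g<(5::nat). 1)" unfolding card_K by (intro sum_mono) auto
    then show ?thesis by simp
  next
    case True
    then obtain e where e: "e < 5" "?f e = 0" by blast
    define F where "F i = ?f ((i + Suc e) mod 5)" for i
    have "card K = (\<Sum>i<4. F i)"
      unfolding card_K F_def using sum_rotate_zero[where f = ?f, OF e] by simp
    then have sum_F: "card K = F 0 + F 1 + F 2 + F 3" by (simp add: eval_nat_numeral)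
    have F_le_2: "F i \<le> 2" for i
      unfolding F_def using card_clique_column_le[OF K] by simp
    have "F i + F (Suc i) \<le> 3" for i
      unfolding F_def using pair[of "(i + Suc e) mod 5"] by (simp add: mod_Suc_eq)
    from this[of 0] this[of 1] this[of 2]
    have F_pair: "F 0 + F 1 \<le> 3" "F 1 + F 2 \<le> 3" "F 2 + F 3 \<le> 3"
      by (simp_all add: numeral_2_eq_2 numeral_3_eq_3)
    show ?thesis
    proof (cases "F 0 = 0 \<or> F 1 = 0 \<or> F 2 = 0 \<or> F 3 = 0")
      case True
      then show ?thesis using sum_F F_le_2[of 0] F_le_2[of 3] F_pair by auto
    next
      case False
      have col: "(Suc e mod 5 + i) mod 5 = (i + Suc e) mod 5" for i
        unfolding mod_add_left_eq by (simp add: add.commute)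
      have "K `` {(Suc e mod 5 + i) mod 5} \<noteq> {}" if "i < 4" for i
      proof -
        have "i = 0 \<or> i = 1 \<or> i = 2 \<or> i = 3" using that by auto
        then have "F i \<noteq> 0" using False by auto
        then show ?thesis unfolding col F_def by auto
      qed
      then have "F i \<le> 1" if "i < 4" for i
        using card_window_columns_le[OF K _ _ _ _ that, of "Suc e mod 5"] that col by (simp add: F_def)
      from this[of 0] this[of 1] this[of 2] this[of 3] show ?thesis using sum_F by simp
    qed
  qed
qed

lemma card_clique_cocycle_product_le_max:
  assumes s: "5 \<le> s" and t: "5 \<le> t" and st: "6 \<le> max s t" and K: "clique (cocycle_product s t) K"
  shows "card K \<le> s div 2 * (t div 2)"
proof (cases "6 \<le> t")
  case True
  then show ?thesis by (rule card_clique_cocycle_product_le[OF s _ K])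
next
  case False
  then have "6 \<le> s" using st by simp
  from card_clique_cocycle_product_le[OF t this clique_cocycle_product_swap[OF K]]
  show ?thesis by (simp add: card_image mult.commute)
qed

theorem mainTheorem9:
  shows "(\<forall>s t :: nat. 5 \<le> s \<longrightarrow> 5 \<le> t \<longrightarrow> 6 \<le> max s t \<longrightarrow>
      int (strong_metric_dim (modular_product (complement (cycle_graph s)) (complement (cycle_graph t))))
        = int s * int t - int (s div 2) * int (t div 2))
    \<and> strong_metric_dim (modular_product (complement (cycle_graph 5)) (complement (cycle_graph 5))) = 20"
proof (intro conjI allI impI)
  fix s t :: nat assume s: "5 \<le> s" and t: "5 \<le> t" and st: "6 \<le> max s t"
  interpret twin_free_diameter_two_graph "cocycle_product s t"
    using twin_free_diameter_two_graph_cocycle_product[OF s t] .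
  have "strong_metric_dim (cocycle_product s t) = s * t - s div 2 * (t div 2)"
    using strong_metric_dim_eq[OF _ clique_cocycle_product_even_grid]
      card_clique_cocycle_product_le_max[OF s t st] s t
    by (simp add: card_even_grid card_cartesian_product)
  moreover have "s div 2 * (t div 2) \<le> s * t" by (intro mult_le_mono) auto
  ultimately show "int (strong_metric_dim (cocycle_product s t)) = int s * int t - int (s div 2) * int (t div 2)"
    by (simp add: of_nat_diff)
next
  interpret twin_free_diameter_two_graph "cocycle_product 5 5"
    using twin_free_diameter_two_graph_cocycle_product by simp
  have "card ((\<lambda>i. (i, i)) ` {..<5::nat}) = 5" by (simp add: card_image inj_on_def)
  then show "strong_metric_dim (cocycle_product 5 5) = 20"
    using strong_metric_dim_eq[OF _ clique_cocycle_product_diagonal] card_clique_cocycle_product_5_5_le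
    by (simp add: card_cartesian_product)
qed

end
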